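(* Let $\kappa$ be a regular uncountable cardinal with $\kappa^{<\kappa}=\kappa$ and $\gamma^\omega<\kappa$ for all $\gamma<\kappa$. There exists a linear order $I$ of size $\kappa$ which is $(<\kappa,bs)$-stable, $(\kappa,bs,bs)$-nice and $\kappa$-colorable.
   Context: For a linear order $A$ (language $\{<\}$), basic formulas are atomic formulas and their negations; for $a\in A$ (or a tuple) and $B\subseteq A$, $tp_{bs}(a,B,A)$ is the set of basic formulas with parameters from $B$ satisfied by $a$ in $A$. A $\kappa$-representation of a set $A$ with $|A|\le\kappa$ is an increasing continuous sequence $\langle A_\alpha\mid\alpha<\kappa\rangle$ of subsets of $A$, each of size $<\kappa$, with union $A$. For $a\in A$ and $B,D\subseteq A$, $tp_{bs}(a,B,A)$ $(bs,bs)$-splits over $D$ if there are $b_1,b_2\in B$ with $tp_{bs}(b_1,D,A)=tp_{bs}(b_2,D,A)$ but $tp_{bs}(a^\frown b_1,D,A)\ne tp_{bs}(a^\frown b_2,D,A)$. For a $\kappa$-representation $\mathbb A$, $Sp_{bs}(\mathbb A)$ is the set of limit $\delta<\kappa$ such that some $a\in A$ has $tp_{bs}(a,A_\delta,A)$ $(bs,bs)$-splitting over $A_\beta$ for every $\beta<\delta$. $A$ is $(\kappa,bs,bs)$-nice if $Sp_{bs}(\mathbb A)$ is non-stationary for a (equivalently every) $\kappa$-representation $\mathbb A$ of $A$. $A$ is $(<\kappa,bs)$-stable if for every $B\subseteq A$ with $|B|<\kappa$, $|\{tp_{bs}(a,B,A)\mid a\in A\}|<\kappa$. A linear order $I$ of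 size $\kappa$ is $\kappa$-colorable if there is $F:I\to\kappa$ such that for every $B\subseteq I$ with $|B|<\kappa$, every $b\in I\setminus B$ with $p=tp_{bs}(b,B,I)$, and every $\alpha<\kappa$, $|\{a\in I\mid a\text{ realizes }p,\ F(a)=\alpha\}|=\kappa$. *)

theory Defs
  imports Main
begin

unbundle cardinal_syntax

datatype 'a trm = Var nat | Par 'a
datatype 'a atom = AEq "'a trm" "'a trm" | ALess "'a trm" "'a trm"
datatype 'a bfml = Pos "'a atom" | Neg "'a atom"

fun trm_val :: "'a list \<Rightarrow> 'a trm \<Rightarrow> 'a" where
  "trm_val a (Var i) = a ! i"
| "trm_val a (Par b) = b"

fun trm_pars :: "'a trm \<Rightarrow> 'a set" where
  "trm_pars (Var i) = {}"
| "trm_pars (Par b) = {b}"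

fun trm_vars :: "'a trm \<Rightarrow> nat set" where
  "trm_vars (Var i) = {i}"
| "trm_vars (Par b) = {}"

fun atom_holds :: "'a rel \<Rightarrow> 'a list \<Rightarrow> 'a atom \<Rightarrow> bool" where
  "atom_holds L a (AEq s t) = (trm_val a s = trm_val a t)"
| "atom_holds L a (ALess s t) = ((trm_val a s, trm_val a t) \<in> L)"

fun atom_pars :: "'a atom \<Rightarrow> 'a set" where
  "atom_pars (AEq s t) = trm_pars s \<union> trm_pars t"
| "atom_pars (ALess s t) = trm_pars s \<union> trm_pars t"

fun atom_vars :: "'a atom \<Rightarrow> nat set" where
  "atom_vars (AEq s t) = trm_vars s \<union> trm_vars t"
| "atom_vars (ALess s t) = trm_vars s \<union> trm_vars t"

fun bf_holds :: "'a rel \<Rightarrow> 'a list \<Rightarrow> 'a bfml \<Rightarrow> bool" where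
  "bf_holds L a (Pos \<phi>) = atom_holds L a \<phi>"
| "bf_holds L a (Neg \<phi>) = (\<not> atom_holds L a \<phi>)"

fun bf_pars :: "'a bfml \<Rightarrow> 'a set" where
  "bf_pars (Pos \<phi>) = atom_pars \<phi>"
| "bf_pars (Neg \<phi>) = atom_pars \<phi>"

fun bf_vars :: "'a bfml \<Rightarrow> nat set" where
  "bf_vars (Pos \<phi>) = atom_vars \<phi>"
| "bf_vars (Neg \<phi>) = atom_vars \<phi>"

text \<open>tp_bs(a,B,A) for a tuple a (a list, variable i denotes a!i), in the
  linear order whose strict order relation is L.\<close>
definition tp_bs :: "'a rel \<Rightarrow> 'a list \<Rightarrow> 'a set \<Rightarrow> 'a bfml set" where
  "tp_bs L a B = {\<phi>. bf_pars \<phi> \<subseteq> B \<and> (\<forall>i\<in>bf_vars \<phi>. i < length a) \<and> bf_holds L a \<phi>}"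

definition bs_splits :: "'a rel \<Rightarrow> 'a \<Rightarrow> 'a set \<Rightarrow> 'a set \<Rightarrow> bool" where
  "bs_splits L a B D \<longleftrightarrow> (\<exists>b1\<in>B. \<exists>b2\<in>B. tp_bs L [b1] D = tp_bs L [b2] D
      \<and> tp_bs L [a, b1] D \<noteq> tp_bs L [a, b2] D)"

section \<open>Ordinals below kappa, represented by a cardinal order r (Field r = UNIV)\<close>

definition olt :: "'k rel \<Rightarrow> 'k \<Rightarrow> 'k \<Rightarrow> bool" where
  "olt r \<alpha> \<beta> \<longleftrightarrow> (\<alpha>, \<beta>) \<in> r \<and> \<alpha> \<noteq> \<beta>"

definition is_limit :: "'k rel \<Rightarrow> 'k \<Rightarrow> bool" where
  "is_limit r \<delta> \<longleftrightarrow> (\<exists>\<beta>. olt r \<beta> \<delta>) \<and> (\<forall>\<beta>. olt r \<beta> \<delta> \<longrightarrow> (\<exists>\<gamma>. olt r \<beta> \<gamma> \<and> olt r \<gamma> \<delta>))"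

definition club :: "'k rel \<Rightarrow> 'k set \<Rightarrow> bool" where
  "club r C \<longleftrightarrow> (\<forall>\<alpha>. \<exists>\<beta>\<in>C. (\<alpha>, \<beta>) \<in> r)
     \<and> (\<forall>\<delta>. is_limit r \<delta> \<and> (\<forall>\<beta>. olt r \<beta> \<delta> \<longrightarrow> (\<exists>\<gamma>\<in>C. olt r \<beta> \<gamma> \<and> olt r \<gamma> \<delta>)) \<longrightarrow> \<delta> \<in> C)"

definition stationary :: "'k rel \<Rightarrow> 'k set \<Rightarrow> bool" where
  "stationary r S \<longleftrightarrow> (\<forall>C. club r C \<longrightarrow> S \<inter> C \<noteq> {})"

definition kappa_rep :: "'k rel \<Rightarrow> 'a set \<Rightarrow> ('k \<Rightarrow> 'a set) \<Rightarrow> bool" where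
  "kappa_rep r A As \<longleftrightarrow>
     (\<forall>\<alpha>. As \<alpha> \<subseteq> A \<and> |As \<alpha>| <o r)
   \<and> (\<forall>\<alpha> \<beta>. (\<alpha>, \<beta>) \<in> r \<longrightarrow> As \<alpha> \<subseteq> As \<beta>)
   \<and> (\<forall>\<delta>. is_limit r \<delta> \<longrightarrow> As \<delta> = (\<Union>\<beta>\<in>{\<beta>. olt r \<beta> \<delta>}. As \<beta>))
   \<and> (\<Union>\<alpha>. As \<alpha>) = A"

definition Sp_bs :: "'k rel \<Rightarrow> 'a rel \<Rightarrow> 'a set \<Rightarrow> ('k \<Rightarrow> 'a set) \<Rightarrow> 'k set" where
  "Sp_bs r L A As = {\<delta>. is_limit r \<delta> \<and>
     (\<exists>a\<in>A. \<forall>\<beta>. olt r \<beta> \<delta> \<longrightarrow> bs_splits L a (As \<delta>) (As \<beta>))}"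

definition nice_bs :: "'k rel \<Rightarrow> 'a set \<Rightarrow> 'a rel \<Rightarrow> bool" where
  "nice_bs r A L \<longleftrightarrow> (\<forall>As. kappa_rep r A As \<longrightarrow> \<not> stationary r (Sp_bs r L A As))"

definition stable_bs :: "'k rel \<Rightarrow> 'a set \<Rightarrow> 'a rel \<Rightarrow> bool" where
  "stable_bs r A L \<longleftrightarrow> (\<forall>B. B \<subseteq> A \<and> |B| <o r \<longrightarrow> |{tp_bs L [a] B | a. a \<in> A}| <o r)"

definition colorable :: "'k rel \<Rightarrow> 'a set \<Rightarrow> 'a rel \<Rightarrow> bool" where
  "colorable r I L \<longleftrightarrow> (\<exists>F :: 'a \<Rightarrow> 'k. \<forall>B. B \<subseteq> I \<and> |B| <o r \<longrightarrow>
     (\<forall>b\<in>I - B. \<forall>\<alpha>. |{a\<in>I. tp_bs L [a] B = tp_bs L [b] B \<and> F a = \<alpha>}| =o r))"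

end

theory Submission
  imports Defs
begin

(*
  The order is the tree kappa^<omega of finite sequences of ordinals below kappa under the
  Kleene--Brouwer order: a sequence lies below each of its prefixes, and sequences that are not
  prefix-comparable are compared lexicographically.

  Stability: over a small prefix-closed set P, the position of a sequence s is determined by the
  longest prefix p of s in P together with the cut that the next entry of s makes among the
  one-step extensions of p in P.  Cuts in a well-order are named by their least element above,
  so fewer than kappa positions occur.

  Colourability: appending [eta, alpha] to s, with eta above every entry that the parameters use
  right after s, does not change the type of s; so each type over a small set contains kappa
  sequences with last entry alpha, and the colouring is "last entry".

  Niceness: the stages delta at which A_delta is closed under prefixes and under lowering an entry
  form a club.  At such a limit stage a sequence a leaves A_delta at a prefix p in A_delta that no
  element of A_delta separates from a.  Already p lies in some earlier A_beta, so the type of a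
  over A_delta does not split over A_beta.
*)

section \<open>Basic types in a linear order\<close>

definition same_position :: "'a rel \<Rightarrow> 'a set \<Rightarrow> 'a \<Rightarrow> 'a \<Rightarrow> bool" where
  "same_position L D x y \<longleftrightarrow>
     (\<forall>d\<in>D. (x = d \<longleftrightarrow> y = d) \<and> ((x, d) \<in> L \<longleftrightarrow> (y, d) \<in> L) \<and> ((d, x) \<in> L \<longleftrightarrow> (d, y) \<in> L))"

lemma same_position_singleton:
  "same_position L {a} x y \<longleftrightarrow>
     (x = a \<longleftrightarrow> y = a) \<and> ((x, a) \<in> L \<longleftrightarrow> (y, a) \<in> L) \<and> ((a, x) \<in> L \<longleftrightarrow> (a, y) \<in> L)"
  by (simp add: same_position_def)

lemma same_position_refl: "same_position L D x x"
  by (simp add: same_position_def)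

lemma same_position_subset: "same_position L D x y \<Longrightarrow> D' \<subseteq> D \<Longrightarrow> same_position L D' x y"
  unfolding same_position_def by blast

lemma tp_bs_eqI:
  assumes len: "length u = length v"
    and inner: "\<And>i j. i < length u \<Longrightarrow> j < length u \<Longrightarrow>
      (u ! i = u ! j \<longleftrightarrow> v ! i = v ! j) \<and> ((u ! i, u ! j) \<in> L \<longleftrightarrow> (v ! i, v ! j) \<in> L)"
    and outer: "\<And>i. i < length u \<Longrightarrow> same_position L D (u ! i) (v ! i)"
  shows "tp_bs L u D = tp_bs L v D"
proof -
  have val: "(\<exists>i<length u. trm_val u s = u ! i \<and> trm_val v s = v ! i)
      \<or> trm_val u s = trm_val v s \<and> trm_val u s \<in> D"
    if "trm_pars s \<subseteq> D" "trm_vars s \<subseteq> {..<length u}" for s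
    using that len by (cases s) auto
  have "atom_holds L u \<phi> = atom_holds L v \<phi>"
    if "atom_pars \<phi> \<subseteq> D" "\<forall>i\<in>atom_vars \<phi>. i < length u" for \<phi>
  proof -
    have "(trm_val u s = trm_val u t \<longleftrightarrow> trm_val v s = trm_val v t)
        \<and> ((trm_val u s, trm_val u t) \<in> L \<longleftrightarrow> (trm_val v s, trm_val v t) \<in> L)"
      if "trm_pars s \<subseteq> D" "trm_vars s \<subseteq> {..<length u}" "trm_pars t \<subseteq> D" "trm_vars t \<subseteq> {..<length u}"
      for s t
      using val[OF that(1,2)] val[OF that(3,4)]
    proof (elim disjE exE conjE)
      fix i j assume "i < length u" "j < length u" and
        "trm_val u s = u ! i" "trm_val v s = v ! i" "trm_val u t = u ! j" "trm_val v t = v ! j"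
      then show ?thesis using inner by simp
    next
      fix i assume "i < length u" "trm_val u s = u ! i" "trm_val v s = v ! i"
        "trm_val u t = trm_val v t" "trm_val u t \<in> D"
      then show ?thesis using outer[of i] unfolding same_position_def by simp
    next
      fix j assume "j < length u" "trm_val u t = u ! j" "trm_val v t = v ! j"
        "trm_val u s = trm_val v s" "trm_val u s \<in> D"
      then show ?thesis using outer[of j] unfolding same_position_def by (simp add: eq_commute)
    qed simp
    then show ?thesis using that by (cases \<phi>) auto
  qed
  then have "bf_holds L u \<phi> = bf_holds L v \<phi>"
    if "bf_pars \<phi> \<subseteq> D" "\<forall>i\<in>bf_vars \<phi>. i < length u" for \<phi>
    using that by (cases \<phi>) auto
  then show ?thesis unfolding tp_bs_def using len by auto
qed

lemma tp_bs_singleton_eq_iff: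
  assumes "(x, x) \<in> L \<longleftrightarrow> (y, y) \<in> L"
  shows "tp_bs L [x] D = tp_bs L [y] D \<longleftrightarrow> same_position L D x y"
proof
  assume eq: "tp_bs L [x] D = tp_bs L [y] D"
  show "same_position L D x y" unfolding same_position_def
  proof
    fix d assume "d \<in> D"
    have "\<phi> \<in> tp_bs L [x] D \<longleftrightarrow> \<phi> \<in> tp_bs L [y] D" for \<phi> using eq by simp
    from this[of "Pos (AEq (Var 0) (Par d))"] this[of "Pos (ALess (Var 0) (Par d))"]
      this[of "Pos (ALess (Par d) (Var 0))"] \<open>d \<in> D\<close>
    show "(x = d \<longleftrightarrow> y = d) \<and> ((x, d) \<in> L \<longleftrightarrow> (y, d) \<in> L) \<and> ((d, x) \<in> L \<longleftrightarrow> (d, y) \<in> L)"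
      by (simp add: tp_bs_def)
  qed
next
  assume "same_position L D x y"
  then show "tp_bs L [x] D = tp_bs L [y] D" using assms by (intro tp_bs_eqI) simp_all
qed

lemma tp_bs_pair_eqI:
  assumes eq: "tp_bs L [b1] D = tp_bs L [b2] D" and a: "same_position L {a} b1 b2"
  shows "tp_bs L [a, b1] D = tp_bs L [a, b2] D"
proof (rule tp_bs_eqI)
  have self: "(b1, b1) \<in> L \<longleftrightarrow> (b2, b2) \<in> L"
    using eq[THEN equalityD1, THEN subsetD, of "Pos (ALess (Var 0) (Var 0))"]
      eq[THEN equalityD2, THEN subsetD, of "Pos (ALess (Var 0) (Var 0))"]
    by (auto simp: tp_bs_def)
  have "same_position L D b1 b2" using tp_bs_singleton_eq_iff[OF self] eq by simp
  then show "same_position L D ([a, b1] ! i) ([a, b2] ! i)" if "i < length [a, b1]" for i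
  proof -
    have "i = 0 \<or> i = 1" using that by auto
    then show ?thesis using \<open>same_position L D b1 b2\<close> same_position_refl by auto
  qed
  show "([a, b1] ! i = [a, b1] ! j \<longleftrightarrow> [a, b2] ! i = [a, b2] ! j)
      \<and> (([a, b1] ! i, [a, b1] ! j) \<in> L \<longleftrightarrow> ([a, b2] ! i, [a, b2] ! j) \<in> L)"
    if "i < length [a, b1]" "j < length [a, b1]" for i j
  proof -
    have "i = 0 \<or> i = 1" "j = 0 \<or> j = 1" using that by auto
    moreover have "(a = b1 \<longleftrightarrow> a = b2) \<and> (b1 = a \<longleftrightarrow> b2 = a) \<and> ((a, b1) \<in> L \<longleftrightarrow> (a, b2) \<in> L) \<and> ((b1, a) \<in> L \<longleftrightarrow> (b2, a) \<in> L)"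
      using a unfolding same_position_singleton by blast
    ultimately show ?thesis using self by (elim disjE) simp_all
  qed
qed simp

lemma bs_splitsE:
  assumes "bs_splits L a B D"
  obtains b1 b2 where "b1 \<in> B" "b2 \<in> B" "tp_bs L [b1] D = tp_bs L [b2] D"
    "\<not> same_position L {a} b1 b2"
  using assms tp_bs_pair_eqI unfolding bs_splits_def by metis

section \<open>The Kleene--Brouwer order on finite sequences\<close>

fun kleene_brouwer :: "('a \<Rightarrow> 'a \<Rightarrow> bool) \<Rightarrow> 'a list \<Rightarrow> 'a list \<Rightarrow> bool" where
  "kleene_brouwer lt [] t = False"
| "kleene_brouwer lt (x # s) [] = True"
| "kleene_brouwer lt (x # s) (y # t) = (lt x y \<or> x = y \<and> kleene_brouwer lt s t)"

definition prefix_closed :: "'a list set \<Rightarrow> bool" where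
  "prefix_closed P \<longleftrightarrow> (\<forall>c\<in>P. \<forall>k. take k c \<in> P)"

lemma prefix_closed_exit:
  assumes "prefix_closed P" "p @ [\<rho>] \<notin> P"
  shows "p @ \<rho> # w \<notin> P"
proof
  assume "p @ \<rho> # w \<in> P"
  then have "take (Suc (length p)) (p @ \<rho> # w) \<in> P"
    using assms(1) unfolding prefix_closed_def by blast
  then show False using assms(2) by simp
qed

definition prefix_len :: "'a list set \<Rightarrow> 'a list \<Rightarrow> nat" where
  "prefix_len P s = (GREATEST k. k \<le> length s \<and> take k s \<in> P)"

lemma prefix_len:
  assumes "[] \<in> P"
  shows "prefix_len P s \<le> length s" "take (prefix_len P s) s \<in> P"
    "k \<le> length s \<Longrightarrow> take k s \<in> P \<Longrightarrow> k \<le> prefix_len P s"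
proof -
  let ?Q = "\<lambda>k. k \<le> length s \<and> take k s \<in> P"
  have "?Q (Greatest ?Q)" by (rule GreatestI_nat[of ?Q 0 "length s"]) (use assms in auto)
  then show "prefix_len P s \<le> length s" "take (prefix_len P s) s \<in> P"
    unfolding prefix_len_def by auto
  show "k \<le> length s \<Longrightarrow> take k s \<in> P \<Longrightarrow> k \<le> prefix_len P s"
    unfolding prefix_len_def by (rule Greatest_le_nat[of ?Q _ "length s"]) auto
qed

lemma prefix_len_exit:
  assumes "[] \<in> P" and n: "n = prefix_len P s" "n < length s"
  shows "s = take n s @ s ! n # drop (Suc n) s" "take n s @ [s ! n] \<notin> P"
proof -
  show "s = take n s @ s ! n # drop (Suc n) s" using n(2) by (simp add: id_take_nth_drop)
  show "take n s @ [s ! n] \<notin> P"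
    using prefix_len(3)[OF assms(1), of "Suc n" s] n by (auto simp: take_Suc_conv_app_nth)
qed

definition prefixes :: "'a list set \<Rightarrow> 'a list set" where
  "prefixes H = insert [] {take k c | c k. c \<in> H}"

lemma prefix_closed_prefixes: "prefix_closed (prefixes H)"
  unfolding prefix_closed_def
proof (intro ballI allI)
  fix c k assume "c \<in> prefixes H"
  then consider "c = []" | c0 j where "c0 \<in> H" "c = take j c0" unfolding prefixes_def by blast
  then show "take k c \<in> prefixes H"
  proof cases
    case (2 c0 j)
    then have "take k c = take (min k j) c0" by simp
    with 2 show ?thesis unfolding prefixes_def by blast
  qed (simp add: prefixes_def)
qed

lemma subset_prefixes: "H \<subseteq> prefixes H"
proof
  fix c assume "c \<in> H"
  then have "take (length c) c \<in> {take k c | c k. c \<in> H}" by blast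
  then show "c \<in> prefixes H" by (simp add: prefixes_def)
qed

locale strict_total_order =
  fixes lt :: "'a \<Rightarrow> 'a \<Rightarrow> bool" (infix \<open>\<prec>\<close> 50)
  assumes irrefl: "\<not> x \<prec> x"
    and trans: "x \<prec> y \<Longrightarrow> y \<prec> z \<Longrightarrow> x \<prec> z"
    and total: "x \<noteq> y \<Longrightarrow> x \<prec> y \<or> y \<prec> x"
begin

lemma asym: "x \<prec> y \<Longrightarrow> \<not> y \<prec> x"
  using irrefl trans by blast

abbreviation kb_order :: "'a list rel" where
  "kb_order \<equiv> {(s, t). kleene_brouwer (\<prec>) s t}"

lemma kb_irrefl: "\<not> kleene_brouwer (\<prec>) s s"
  by (induction s) (auto simp: irrefl)

lemma kb_trans: "kleene_brouwer (\<prec>) s t \<Longrightarrow> kleene_brouwer (\<prec>) t u \<Longrightarrow> kleene_brouwer (\<prec>) s u"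
proof (induction s arbitrary: t u)
  case (Cons x s)
  then show ?case by (cases t; cases u) (auto intro: trans)
qed simp

lemma kb_asym: "kleene_brouwer (\<prec>) s t \<Longrightarrow> \<not> kleene_brouwer (\<prec>) t s"
  using kb_trans kb_irrefl by blast

lemma kb_total: "s \<noteq> t \<Longrightarrow> kleene_brouwer (\<prec>) s t \<or> kleene_brouwer (\<prec>) t s"
proof (induction s arbitrary: t)
  case Nil
  then show ?case by (cases t) auto
next
  case (Cons x s)
  then show ?case by (cases t) (auto dest: total)
qed

lemma kb_append_left: "kleene_brouwer (\<prec>) (p @ u) (p @ v) = kleene_brouwer (\<prec>) u v"
  by (induction p) (auto simp: irrefl)

lemma kb_extension: "u \<noteq> [] \<Longrightarrow> kleene_brouwer (\<prec>) (p @ u) p"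
  using kb_append_left[of p u "[]"] by (cases u) auto

lemma kb_not_extension:
  assumes "\<nexists>u. c = p @ u"
  shows "kleene_brouwer (\<prec>) c (p @ v) = kleene_brouwer (\<prec>) c p
    \<and> kleene_brouwer (\<prec>) (p @ v) c = kleene_brouwer (\<prec>) p c"
  using assms
proof (induction p arbitrary: c)
  case (Cons y p)
  show ?case
  proof (cases c)
    case (Cons x c')
    then show ?thesis using Cons.IH[of c'] Cons.prems by (cases "x = y") auto
  qed simp
qed simp

lemma same_position_exit:
  assumes P: "prefix_closed P" and out: "p @ [\<rho>1] \<notin> P" "p @ [\<rho>2] \<notin> P"
    and cut: "\<And>\<xi>. p @ [\<xi>] \<in> P \<Longrightarrow> \<rho>1 \<prec> \<xi> \<longleftrightarrow> \<rho>2 \<prec> \<xi>"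
  shows "same_position kb_order P (p @ \<rho>1 # w1) (p @ \<rho>2 # w2)"
  unfolding same_position_def
proof
  fix c assume c: "c \<in> P"
  have ne: "p @ \<rho>1 # w1 \<noteq> c" "p @ \<rho>2 # w2 \<noteq> c"
    using prefix_closed_exit[OF P] out c by blast+
  consider "c = p" | \<xi> u where "c = p @ \<xi> # u" | "\<nexists>u. c = p @ u"
  proof (cases "\<exists>u. c = p @ u")
    case True
    then obtain u where "c = p @ u" by blast
    then show ?thesis using that by (cases u) auto
  qed blast
  then have "(kleene_brouwer (\<prec>) (p @ \<rho>1 # w1) c \<longleftrightarrow> kleene_brouwer (\<prec>) (p @ \<rho>2 # w2) c)
    \<and> (kleene_brouwer (\<prec>) c (p @ \<rho>1 # w1) \<longleftrightarrow> kleene_brouwer (\<prec>) c (p @ \<rho>2 # w2))"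
  proof cases
    case 1
    then show ?thesis using kb_extension[of "_ # _" p] kb_asym by simp
  next
    case (2 \<xi> u)
    have "take (Suc (length p)) c \<in> P" using c P unfolding prefix_closed_def by blast
    then have "p @ [\<xi>] \<in> P" using 2 by simp
    then have "\<xi> \<noteq> \<rho>1" "\<xi> \<noteq> \<rho>2" "\<rho>1 \<prec> \<xi> \<longleftrightarrow> \<rho>2 \<prec> \<xi>" using out cut by auto
    then show ?thesis using 2 total asym by (auto simp: kb_append_left)
  next
    case 3
    then show ?thesis using kb_not_extension[OF 3] by simp
  qed
  then show "(p @ \<rho>1 # w1 = c \<longleftrightarrow> p @ \<rho>2 # w2 = c)
    \<and> ((p @ \<rho>1 # w1, c) \<in> kb_order \<longleftrightarrow> (p @ \<rho>2 # w2, c) \<in> kb_order)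
    \<and> ((c, p @ \<rho>1 # w1) \<in> kb_order \<longleftrightarrow> (c, p @ \<rho>2 # w2) \<in> kb_order)"
    using ne by simp
qed

definition lowerings :: "'a list \<Rightarrow> 'a list set" where
  "lowerings s = range (\<lambda>k. take k s) \<union> {take k s @ [\<xi>] | k \<xi>. k < length s \<and> \<not> s ! k \<prec> \<xi>}"

definition down_closed :: "'a list set \<Rightarrow> bool" where
  "down_closed S \<longleftrightarrow> (\<forall>s\<in>S. lowerings s \<subseteq> S)"

lemma down_closed_prefix_closed: "down_closed S \<Longrightarrow> prefix_closed S"
  unfolding down_closed_def lowerings_def prefix_closed_def by blast

lemma kb_exit_down_closed:
  assumes S: "down_closed S" and out: "p @ [\<rho>] \<notin> S" and c: "c \<in> S" "c \<noteq> p"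
  shows "kleene_brouwer (\<prec>) c (p @ \<rho> # w) \<longleftrightarrow> kleene_brouwer (\<prec>) c p"
    and "kleene_brouwer (\<prec>) (p @ \<rho> # w) c \<longleftrightarrow> kleene_brouwer (\<prec>) p c"
proof -
  have "c \<noteq> p @ \<rho> # w"
    using prefix_closed_exit[OF down_closed_prefix_closed[OF S] out] c(1) by blast
  moreover have "kleene_brouwer (\<prec>) c (p @ \<rho> # w) \<longleftrightarrow> kleene_brouwer (\<prec>) c p"
  proof (cases "\<exists>u. c = p @ u")
    case True
    with c(2) obtain \<xi> u where cu: "c = p @ \<xi> # u" by (metis append.right_neutral neq_Nil_conv)
    have "\<not> \<rho> \<prec> \<xi>"
    proof
      assume "\<rho> \<prec> \<xi>"
      then have "take (length p) c @ [\<rho>] \<in> lowerings c"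
        unfolding lowerings_def using cu asym by fastforce
      then show False using S c(1) out cu unfolding down_closed_def by auto
    qed
    moreover have "take (Suc (length p)) c \<in> S"
      using down_closed_prefix_closed[OF S] c(1) unfolding prefix_closed_def by blast
    then have "\<xi> \<noteq> \<rho>" using out cu by auto
    ultimately have "\<xi> \<prec> \<rho>" using total by blast
    then show ?thesis using cu kb_extension[of "\<xi> # u" p] by (simp add: kb_append_left)
  next
    case False
    then show ?thesis using kb_not_extension[OF False] by simp
  qed
  ultimately show "kleene_brouwer (\<prec>) c (p @ \<rho> # w) \<longleftrightarrow> kleene_brouwer (\<prec>) c p"
    and "kleene_brouwer (\<prec>) (p @ \<rho> # w) c \<longleftrightarrow> kleene_brouwer (\<prec>) p c"
    using c(2) kb_total kb_asym by blast+
qed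

lemma same_position_exit_down_closed:
  assumes S: "down_closed S" and out: "p @ [\<rho>] \<notin> S" and c: "c1 \<in> S" "c2 \<in> S"
    and pos: "same_position kb_order {p} c1 c2"
  shows "same_position kb_order {p @ \<rho> # w} c1 c2"
proof (cases "c1 = p")
  case True
  then show ?thesis using pos by (simp add: same_position_singleton)
next
  case False
  then have "c2 \<noteq> p" using pos by (simp add: same_position_singleton)
  moreover have "c1 \<noteq> p @ \<rho> # w" "c2 \<noteq> p @ \<rho> # w"
    using prefix_closed_exit[OF down_closed_prefix_closed[OF S] out] c by blast+
  ultimately show ?thesis
    using pos False kb_exit_down_closed[OF S out] c by (simp add: same_position_singleton)
qed

lemma same_position_append_above:
  assumes out: "s \<notin> H" and above: "\<And>u. u \<noteq> [] \<Longrightarrow> s @ u \<in> H \<Longrightarrow> hd u \<prec> \<eta>"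
  shows "same_position kb_order H (s @ \<eta> # w) s"
  unfolding same_position_def
proof
  fix c assume c: "c \<in> H"
  have ne: "c \<noteq> s" "c \<noteq> s @ \<eta> # w"
    using out c above[of "\<eta> # w"] irrefl by auto
  have ext: "kleene_brouwer (\<prec>) (s @ \<eta> # w) s" by (rule kb_extension) simp
  have "kleene_brouwer (\<prec>) c (s @ \<eta> # w)" if "kleene_brouwer (\<prec>) c s"
  proof (cases "\<exists>u. c = s @ u")
    case True
    then obtain \<gamma> u where "c = s @ \<gamma> # u" using ne(1) by (metis append.right_neutral neq_Nil_conv)
    moreover have "\<gamma> \<prec> \<eta>" using above[of "\<gamma> # u"] c calculation by simp
    ultimately show ?thesis by (simp add: kb_append_left)
  next
    case False
    then show ?thesis using kb_not_extension[OF False] that by simp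
  qed
  then have "kleene_brouwer (\<prec>) c (s @ \<eta> # w) \<longleftrightarrow> kleene_brouwer (\<prec>) c s"
    and "kleene_brouwer (\<prec>) (s @ \<eta> # w) c \<longleftrightarrow> kleene_brouwer (\<prec>) s c"
    using ext ne kb_trans kb_total kb_asym by blast+
  then show "(s @ \<eta> # w = c \<longleftrightarrow> s = c) \<and> ((s @ \<eta> # w, c) \<in> kb_order \<longleftrightarrow> (s, c) \<in> kb_order)
    \<and> ((c, s @ \<eta> # w) \<in> kb_order \<longleftrightarrow> (c, s) \<in> kb_order)"
    using ne by auto
qed

lemma down_closed_shadow:
  assumes S: "down_closed S" "S \<noteq> {}"
  obtains p where "p \<in> S"
    "\<And>c1 c2. c1 \<in> S \<Longrightarrow> c2 \<in> S \<Longrightarrow> same_position kb_order {p} c1 c2 \<Longrightarrow> same_position kb_order {s} c1 c2"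
proof (cases "s \<in> S")
  case True
  then show ?thesis using that by blast
next
  case False
  have "[] \<in> S"
    using S down_closed_prefix_closed[OF S(1)] unfolding prefix_closed_def by (metis all_not_in_conv take_0)
  define n where "n = prefix_len S s"
  define p where "p = take n s"
  have "p \<in> S" using prefix_len(2)[OF \<open>[] \<in> S\<close>] unfolding p_def n_def .
  then have "n < length s" using False prefix_len(1)[OF \<open>[] \<in> S\<close>, of s] unfolding p_def n_def
    by (metis le_neq_implies_less take_all_iff)
  then have "s = p @ s ! n # drop (Suc n) s" "p @ [s ! n] \<notin> S"
    using prefix_len_exit[OF \<open>[] \<in> S\<close> n_def] unfolding p_def by auto
  then show ?thesis
    using that[OF \<open>p \<in> S\<close>] same_position_exit_down_closed[OF S(1)] by metis
qed

end

section \<open>Small sets below a regular uncountable cardinal\<close>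

locale regular_cardinal =
  fixes r :: "'k rel"
  assumes card_order: "card_order r" and regular: "regularCard r" and uncountable: "natLeq <o r"
begin

abbreviation small :: "'b set \<Rightarrow> bool" where
  "small X \<equiv> |X| <o r"

lemma Field_r: "Field r = UNIV" and Card_order_r: "Card_order r"
  using card_order_on_Card_order[OF card_order] by auto

lemma Well_order_r: "Well_order r"
  using Card_order_r card_order_on_well_order_on by blast

lemma infinite_Field_r: "\<not> finite (Field r)"
proof
  assume "finite (Field r)"
  then have "|Field r| <o natLeq" using finite_iff_ordLess_natLeq by blast
  then have "r <o natLeq"
    using card_of_Field_ordIso[OF Card_order_r] ordIso_symmetric ordIso_ordLess_trans by blast
  with uncountable show False using ordLess_transitive ordLess_irreflexive by blast
qed

lemma small_finite: "finite X \<Longrightarrow> small X"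
  using finite_iff_ordLess_natLeq uncountable ordLess_transitive by blast

lemma small_subset: "small Y \<Longrightarrow> X \<subseteq> Y \<Longrightarrow> small X"
  using card_of_mono1 ordLeq_ordLess_trans by blast

lemma small_image: "small X \<Longrightarrow> small (f ` X)"
  using card_of_image ordLeq_ordLess_trans by blast

lemma small_Un: "small X \<Longrightarrow> small Y \<Longrightarrow> small (X \<union> Y)"
  using card_of_Un_ordLess_infinite_Field[OF infinite_Field_r Card_order_r] by blast

lemma small_insert: "small X \<Longrightarrow> small (insert x X)"
  using small_Un[OF small_finite[of "{x}"]] by simp

lemma small_UN: "small A \<Longrightarrow> (\<And>a. a \<in> A \<Longrightarrow> small (F a)) \<Longrightarrow> small (\<Union>a\<in>A. F a)"
  using stable_UNION[OF regularCard_stable[OF Card_order_r infinite_Field_r regular]] by blast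

lemma small_Times: "small A \<Longrightarrow> small B \<Longrightarrow> small (A \<times> B)"
proof -
  assume "small A" "small B"
  then have "small (\<Union>a\<in>A. Pair a ` B)" by (intro small_UN small_image)
  moreover have "A \<times> B = (\<Union>a\<in>A. Pair a ` B)" by auto
  ultimately show ?thesis by simp
qed

lemma small_nat: "small (UNIV :: nat set)"
  using card_of_nat uncountable ordIso_ordLess_trans by blast

lemma card_of_UNIV: "|UNIV :: 'k set| =o r"
  using card_of_Field_ordIso[OF Card_order_r] Field_r by simp

lemma not_small_ordLeq: "\<not> small X \<Longrightarrow> r \<le>o |X|"
  using not_ordLess_iff_ordLeq[OF Well_order_r card_of_Well_order] by blast

sublocale strict_total_order "olt r"
proof
  have "trans r" "antisym r" "total_on UNIV r"
    using Well_order_r Field_r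
    by (auto simp: well_order_on_def linear_order_on_def partial_order_on_def preorder_on_def)
  then show "\<not> olt r x x" "olt r x y \<Longrightarrow> olt r y z \<Longrightarrow> olt r x z" "x \<noteq> y \<Longrightarrow> olt r x y \<or> olt r y x"
    for x y z unfolding olt_def trans_def antisym_def total_on_def by blast+
qed

lemma olt_least:
  assumes "Q x"
  shows "\<exists>z. Q z \<and> (\<forall>y. Q y \<longrightarrow> \<not> olt r y z)"
proof -
  have "{(x, y). olt r x y} = r - Id" by (auto simp: olt_def)
  then have "wf {(x, y). olt r x y}" using Well_order_r by (simp add: well_order_on_def)
  then obtain z where "z \<in> {x. Q x}" "\<And>y. (y, z) \<in> {(x, y). olt r x y} \<Longrightarrow> y \<notin> {x. Q x}"
    using wfE_min[of _ x "{x. Q x}"] assms by blast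
  then show ?thesis by blast
qed

lemma small_not_above: "small {\<eta>. \<not> olt r \<gamma> \<eta>}"
proof -
  have "{\<eta>. \<not> olt r \<gamma> \<eta>} \<subseteq> underS r \<gamma> \<union> {\<gamma>}"
    using total by (auto simp: underS_def olt_def)
  moreover have "small (underS r \<gamma> \<union> {\<gamma>})"
    using small_Un[OF card_of_underS[OF Card_order_r, of \<gamma>] small_finite[of "{\<gamma>}"]] Field_r by auto
  ultimately show ?thesis using small_subset by blast
qed

lemma not_small_above: "\<not> small {\<eta>. olt r \<gamma> \<eta>}"
proof
  assume "small {\<eta>. olt r \<gamma> \<eta>}"
  then have "small ({\<eta>. olt r \<gamma> \<eta>} \<union> {\<eta>. \<not> olt r \<gamma> \<eta>})"
    using small_not_above small_Un by blast
  moreover have "{\<eta>. olt r \<gamma> \<eta>} \<union> {\<eta>. \<not> olt r \<gamma> \<eta>} = UNIV" by auto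
  ultimately show False using card_of_UNIV not_ordLess_ordIso by metis
qed

lemma small_bounded:
  assumes "small K"
  obtains \<gamma> where "\<And>k. k \<in> K \<Longrightarrow> olt r k \<gamma>"
proof -
  have "\<exists>\<gamma>. \<forall>k\<in>K. \<not> olt r \<gamma> k"
  proof (rule ccontr)
    assume "\<nexists>\<gamma>. \<forall>k\<in>K. \<not> olt r \<gamma> k"
    then have "cofinal K r" unfolding cofinal_def olt_def by blast
    then have "|K| =o r" using regular Field_r unfolding regularCard_def by blast
    with assms show False using not_ordLess_ordIso by blast
  qed
  then obtain \<gamma> where \<gamma>: "\<forall>k\<in>K. \<not> olt r \<gamma> k" by blast
  have "{\<eta>. olt r \<gamma> \<eta>} \<noteq> {}" using not_small_above[of \<gamma>] small_finite[OF finite.emptyI] by force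
  then obtain \<gamma>' where \<gamma>': "olt r \<gamma> \<gamma>'" by blast
  show ?thesis
  proof (rule that)
    fix k assume "k \<in> K"
    then have "k = \<gamma> \<or> olt r k \<gamma>" using \<gamma> total by blast
    then show "olt r k \<gamma>'" using \<gamma>' trans by blast
  qed
qed

lemma small_lowerings: "small (lowerings s)"
proof -
  have "lowerings s \<subseteq> (\<lambda>k. take k s) ` {..length s}
      \<union> (\<Union>k<length s. (\<lambda>\<xi>. take k s @ [\<xi>]) ` {\<xi>. \<not> olt r (s ! k) \<xi>})"
  proof
    fix y assume "y \<in> lowerings s"
    then consider k where "y = take k s"
      | k \<xi> where "k < length s" "\<not> olt r (s ! k) \<xi>" "y = take k s @ [\<xi>]"
      unfolding lowerings_def by blast
    then show "y \<in> (\<lambda>k. take k s) ` {..length s}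
      \<union> (\<Union>k<length s. (\<lambda>\<xi>. take k s @ [\<xi>]) ` {\<xi>. \<not> olt r (s ! k) \<xi>})"
    proof cases
      case (1 k)
      then have "y = take (min k (length s)) s" by (simp add: min_def)
      then show ?thesis by auto
    qed blast
  qed
  moreover have "small (\<Union>k<length s. (\<lambda>\<xi>. take k s @ [\<xi>]) ` {\<xi>. \<not> olt r (s ! k) \<xi>})"
    by (intro small_UN small_finite small_image small_not_above) simp
  moreover have "small ((\<lambda>k. take k s) ` {..length s})" by (rule small_finite) simp
  ultimately show ?thesis using small_Un small_subset by blast
qed

end

section \<open>Positions over small sets of sequences\<close>

context regular_cardinal
begin

lemma wo_rel_r: "wo_rel r"
  using Well_order_r by (simp add: wo_rel_def)

definition next_above :: "'k set \<Rightarrow> 'k \<Rightarrow> 'k option" where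
  "next_above X \<rho> =
     (if \<exists>\<xi>\<in>X. olt r \<rho> \<xi> then Some (wo_rel.minim r {\<xi>\<in>X. olt r \<rho> \<xi>}) else None)"

lemma next_above_Some:
  assumes "\<xi> \<in> X" "olt r \<rho> \<xi>"
  obtains \<zeta> where "next_above X \<rho> = Some \<zeta>" "\<zeta> \<in> X" "olt r \<rho> \<zeta>" "(\<zeta>, \<xi>) \<in> r"
proof -
  let ?U = "{\<xi>\<in>X. olt r \<rho> \<xi>}"
  have U: "?U \<subseteq> Field r" "?U \<noteq> {}" "\<xi> \<in> ?U" using assms Field_r by auto
  have "wo_rel.minim r ?U \<in> ?U" "(wo_rel.minim r ?U, \<xi>) \<in> r"
    using wo_rel.minim_in[OF wo_rel_r U(1,2)] wo_rel.minim_least[OF wo_rel_r U(1,3)] .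
  moreover have "next_above X \<rho> = Some (wo_rel.minim r ?U)"
    using assms unfolding next_above_def by (metis (lifting))
  ultimately show ?thesis using that by blast
qed

lemma next_above_in: "next_above X \<rho> \<in> insert None (Some ` X)"
proof (cases "\<exists>\<xi>\<in>X. olt r \<rho> \<xi>")
  case True
  then show ?thesis using next_above_Some by (metis image_eqI insertCI)
qed (simp add: next_above_def)

lemma next_above_eq_imp:
  assumes eq: "next_above X \<rho>1 = next_above X \<rho>2" and \<xi>: "\<xi> \<in> X" "olt r \<rho>1 \<xi>"
  shows "olt r \<rho>2 \<xi>"
proof -
  obtain \<zeta> where \<zeta>: "next_above X \<rho>1 = Some \<zeta>" "(\<zeta>, \<xi>) \<in> r"
    using next_above_Some[OF \<xi>] by blast
  then have "\<exists>\<xi>\<in>X. olt r \<rho>2 \<xi>" using eq unfolding next_above_def by (auto split: if_splits)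
  then obtain \<zeta>' where "next_above X \<rho>2 = Some \<zeta>'" "olt r \<rho>2 \<zeta>'"
    using next_above_Some by blast
  then have "olt r \<rho>2 \<zeta>" using eq \<zeta>(1) by simp
  moreover have "\<zeta> = \<xi> \<or> olt r \<zeta> \<xi>" using \<zeta>(2) unfolding olt_def by blast
  ultimately show ?thesis using trans by blast
qed

lemma next_above_eq:
  assumes "next_above X \<rho>1 = next_above X \<rho>2" "\<xi> \<in> X"
  shows "olt r \<rho>1 \<xi> \<longleftrightarrow> olt r \<rho>2 \<xi>"
  using next_above_eq_imp[OF assms] next_above_eq_imp[OF assms(1)[symmetric] assms(2)] by blast

text \<open>\<open>None\<close>: \<open>s \<in> P\<close>; \<open>Some c\<close>: \<open>s\<close> leaves \<open>P\<close> right after its prefix \<open>p\<close>, and \<open>c\<close>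
  names the cut of the next entry among the one-step extensions of \<open>p\<close> in \<open>P\<close>.\<close>

definition signature :: "'k list set \<Rightarrow> 'k list \<Rightarrow> 'k list \<times> 'k option option" where
  "signature P s = (let n = prefix_len P s; p = take n s in
     (p, if n = length s then None else Some (next_above {\<xi>. p @ [\<xi>] \<in> P} (s ! n))))"

lemma same_position_signature:
  assumes P: "prefix_closed P" "[] \<in> P" and eq: "signature P s1 = signature P s2"
  shows "same_position kb_order P s1 s2"
proof -
  define n1 n2 where "n1 = prefix_len P s1" and "n2 = prefix_len P s2"
  define p where "p = take n1 s1"
  have le: "n1 \<le> length s1" "n2 \<le> length s2" using prefix_len(1)[OF P(2)] n1_def n2_def by auto
  have p2: "take n2 s2 = p" using eq unfolding signature_def Let_def n1_def n2_def p_def by simp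
  have "length p = n1" "length (take n2 s2) = n2" using le p_def by simp_all
  then have n: "n2 = n1" using p2 by simp
  show ?thesis
  proof (cases "n1 = length s1")
    case True
    then have "n2 = length s2"
      using eq n unfolding signature_def Let_def n1_def n2_def by (auto split: if_splits)
    then have "s1 = s2" using True p2 p_def by simp
    then show ?thesis by (simp add: same_position_def)
  next
    case False
    then have lt: "n1 < length s1" "n2 < length s2" and
      cut: "next_above {\<xi>. p @ [\<xi>] \<in> P} (s1 ! n1) = next_above {\<xi>. p @ [\<xi>] \<in> P} (s2 ! n1)"
      using eq n le p2 unfolding signature_def Let_def n1_def n2_def p_def by (auto split: if_splits)
    have s1: "s1 = p @ s1 ! n1 # drop (Suc n1) s1" "p @ [s1 ! n1] \<notin> P"
      using prefix_len_exit[OF P(2) n1_def lt(1)] unfolding p_def by auto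
    have s2: "s2 = p @ s2 ! n1 # drop (Suc n1) s2" "p @ [s2 ! n1] \<notin> P"
      using prefix_len_exit[OF P(2) n2_def lt(2)] p2 unfolding n by auto
    have "same_position kb_order P (p @ s1 ! n1 # drop (Suc n1) s1) (p @ s2 ! n1 # drop (Suc n1) s2)"
      by (rule same_position_exit[OF P(1) s1(2) s2(2)]) (simp add: next_above_eq[OF cut])
    then show ?thesis using s1(1) s2(1) by simp
  qed
qed

lemma small_range_signature:
  assumes "small P" "[] \<in> P"
  shows "small (range (signature P))"
proof -
  let ?R = "insert None (Some ` insert None (Some ` last ` P))"
  have "signature P s \<in> P \<times> ?R" for s
  proof -
    let ?p = "take (prefix_len P s) s"
    have "{\<xi>. ?p @ [\<xi>] \<in> P} \<subseteq> last ` P"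
    proof
      fix \<xi> assume "\<xi> \<in> {\<xi>. ?p @ [\<xi>] \<in> P}"
      then show "\<xi> \<in> last ` P" by (intro rev_image_eqI[of "?p @ [\<xi>]"]) simp_all
    qed
    then have "insert None (Some ` {\<xi>. ?p @ [\<xi>] \<in> P}) \<subseteq> insert None (Some ` last ` P)"
      by (intro insert_mono image_mono)
    then have "next_above {\<xi>. ?p @ [\<xi>] \<in> P} \<rho> \<in> insert None (Some ` last ` P)" for \<rho>
      using next_above_in by (rule subsetD)
    then show ?thesis
      using prefix_len(2)[OF assms(2)] unfolding signature_def Let_def by (simp add: inj_image_mem_iff)
  qed
  moreover have "small ?R" by (intro small_insert small_image assms(1))
  ultimately show ?thesis using small_Times[OF assms(1)] small_subset by blast
qed

lemma small_prefixes: "small H \<Longrightarrow> small (prefixes H)"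
proof -
  assume "small H"
  then have "small (insert [] (\<Union>c\<in>H. (\<lambda>k. take k c) ` {..length c}))"
    by (intro small_insert small_UN) (simp_all add: small_finite)
  moreover have "prefixes H \<subseteq> insert [] (\<Union>c\<in>H. (\<lambda>k. take k c) ` {..length c})"
  proof
    fix y assume "y \<in> prefixes H"
    then consider "y = []" | c k where "c \<in> H" "y = take k c"
      unfolding prefixes_def by blast
    then show "y \<in> insert [] (\<Union>c\<in>H. (\<lambda>k. take k c) ` {..length c})"
    proof cases
      case (2 c k)
      then have "y = take (min k (length c)) c" by (simp add: min_def)
      moreover have "min k (length c) \<in> {..length c}" by simp
      ultimately show ?thesis using 2(1) by blast
    qed simp
  qed
  ultimately show ?thesis using small_subset by blast
qed

end

section \<open>Closure points of a \<open>\<kappa>\<close>-representation\<close>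

lemma kappa_repD:
  assumes "kappa_rep r A As"
  shows "As \<alpha> \<subseteq> A" and "|As \<alpha>| <o r" and "(\<alpha>, \<beta>) \<in> r \<Longrightarrow> As \<alpha> \<subseteq> As \<beta>"
    and "is_limit r \<delta> \<Longrightarrow> As \<delta> = (\<Union>\<beta>\<in>{\<beta>. olt r \<beta> \<delta>}. As \<beta>)" and "(\<Union>\<alpha>. As \<alpha>) = A"
  using assms unfolding kappa_rep_def by simp_all

context regular_cardinal
begin

lemma kappa_rep_mono: "kappa_rep r A As \<Longrightarrow> olt r \<alpha> \<beta> \<Longrightarrow> As \<alpha> \<subseteq> As \<beta>"
  using kappa_repD(3)[of r A As \<alpha> \<beta>] by (simp add: olt_def)

lemma kappa_rep_limit:
  assumes "kappa_rep r A As" "is_limit r \<delta>" "x \<in> As \<delta>"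
  obtains \<beta> where "olt r \<beta> \<delta>" "x \<in> As \<beta>"
proof -
  have "x \<in> (\<Union>\<beta>\<in>{\<beta>. olt r \<beta> \<delta>}. As \<beta>)" using kappa_repD(4)[OF assms(1,2)] assms(3) by simp
  then show ?thesis using that by blast
qed

lemma kappa_rep_small_subset:
  assumes rep: "kappa_rep r A As" and X: "small X" "X \<subseteq> A"
  obtains \<beta> where "olt r \<alpha> \<beta>" "X \<subseteq> As \<beta>"
proof -
  have "relChain r As" unfolding relChain_def using kappa_repD(3)[OF rep] by blast
  moreover have "X \<subseteq> (\<Union>i\<in>Field r. As i)" using X(2) kappa_repD(5)[OF rep] Field_r by simp
  ultimately obtain i where i: "X \<subseteq> As i"
    using regularCard_UNION[OF Card_order_r regular _ _ X(1)] by blast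
  have "small {\<alpha>, i}" by (rule small_finite) simp
  then obtain \<beta> where "\<And>k. k \<in> {\<alpha>, i} \<Longrightarrow> olt r k \<beta>" using small_bounded by blast
  then show ?thesis using that i kappa_rep_mono[OF rep] by blast
qed

lemma omega_limit:
  assumes inc: "\<And>n. olt r (f n) (f (Suc n))"
  obtains \<delta> where "is_limit r \<delta>" "\<And>n. olt r (f n) \<delta>" "\<And>\<beta>. olt r \<beta> \<delta> \<Longrightarrow> \<exists>n. olt r \<beta> (f n)"
proof -
  obtain \<gamma> where "\<And>k. k \<in> range f \<Longrightarrow> olt r k \<gamma>"
    using small_bounded[OF small_image[OF small_nat]] by blast
  then have "\<forall>n. olt r (f n) \<gamma>" by simp
  then obtain \<delta> where \<delta>: "\<forall>n. olt r (f n) \<delta>" and least: "\<And>y. \<forall>n. olt r (f n) y \<Longrightarrow> \<not> olt r y \<delta>"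
    using olt_least[of "\<lambda>y. \<forall>n. olt r (f n) y"] by blast
  have below: "\<exists>n. olt r \<beta> (f n)" if "olt r \<beta> \<delta>" for \<beta>
  proof -
    have "\<not> (\<forall>n. olt r (f n) \<beta>)" using least that by blast
    then obtain n where "\<not> olt r (f n) \<beta>" by blast
    then have "\<beta> = f n \<or> olt r \<beta> (f n)" using total by blast
    then have "olt r \<beta> (f (Suc n))" using inc[of n] trans[of \<beta> "f n" "f (Suc n)"] by blast
    then show ?thesis by blast
  qed
  have "is_limit r \<delta>" unfolding is_limit_def
    using \<delta> below by blast
  then show ?thesis using that \<delta> below by blast
qed

lemma closure_points_closed:
  assumes rep: "kappa_rep r A As" and lim: "is_limit r \<delta>"
    and cof: "\<And>\<beta>. olt r \<beta> \<delta> \<Longrightarrow> \<exists>\<gamma>. (\<forall>x\<in>As \<gamma>. g x \<subseteq> As \<gamma>) \<and> olt r \<beta> \<gamma> \<and> olt r \<gamma> \<delta>"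
  shows "\<forall>x\<in>As \<delta>. g x \<subseteq> As \<delta>"
proof
  fix x assume "x \<in> As \<delta>"
  then obtain \<beta> where "olt r \<beta> \<delta>" "x \<in> As \<beta>" by (rule kappa_rep_limit[OF rep lim])
  then obtain \<gamma> where "\<forall>x\<in>As \<gamma>. g x \<subseteq> As \<gamma>" "olt r \<beta> \<gamma>" "olt r \<gamma> \<delta>" using cof by blast
  then show "g x \<subseteq> As \<delta>" using \<open>x \<in> As \<beta>\<close> kappa_rep_mono[OF rep] by blast
qed

lemma closure_point_above:
  assumes rep: "kappa_rep r A As"
    and g: "\<And>x. x \<in> A \<Longrightarrow> small (g x)" "\<And>x. x \<in> A \<Longrightarrow> g x \<subseteq> A"
  shows "\<exists>\<delta>. (\<alpha>, \<delta>) \<in> r \<and> (\<forall>x\<in>As \<delta>. g x \<subseteq> As \<delta>)"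
proof -
  note As = kappa_repD(1,2)[OF rep]
  have "\<exists>\<beta>'. olt r \<beta> \<beta>' \<and> (\<Union>x\<in>As \<beta>. g x) \<subseteq> As \<beta>'" for \<beta>
  proof -
    have "small (\<Union>x\<in>As \<beta>. g x)" using As g by (intro small_UN) auto
    moreover have "(\<Union>x\<in>As \<beta>. g x) \<subseteq> A" using As g by blast
    ultimately obtain \<beta>' where "olt r \<beta> \<beta>'" "(\<Union>x\<in>As \<beta>. g x) \<subseteq> As \<beta>'"
      using kappa_rep_small_subset[OF rep] by blast
    then show ?thesis by blast
  qed
  then obtain next_stage where next_stage:
    "\<And>\<beta>. olt r \<beta> (next_stage \<beta>)" "\<And>\<beta>. (\<Union>x\<in>As \<beta>. g x) \<subseteq> As (next_stage \<beta>)"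
    by metis
  define f where "f n = (next_stage ^^ n) \<alpha>" for n
  have f_Suc: "f (Suc n) = next_stage (f n)" for n unfolding f_def by simp
  have "olt r (f n) (f (Suc n))" for n using next_stage(1) f_Suc by simp
  then obtain \<delta> where lim: "is_limit r \<delta>" and above: "\<And>n. olt r (f n) \<delta>"
    and below: "\<And>\<beta>. olt r \<beta> \<delta> \<Longrightarrow> \<exists>n. olt r \<beta> (f n)"
    using omega_limit[of f] by blast
  have "g x \<subseteq> As \<delta>" if x: "x \<in> As \<delta>" for x
  proof -
    obtain \<beta> where "olt r \<beta> \<delta>" "x \<in> As \<beta>" by (rule kappa_rep_limit[OF rep lim x])
    then obtain n where "olt r \<beta> (f n)" using below by blast
    then have "x \<in> As (f n)" using \<open>x \<in> As \<beta>\<close> kappa_rep_mono[OF rep] by blast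
    then have "g x \<subseteq> As (next_stage (f n))" using next_stage(2)[of "f n"] by blast
    then have "g x \<subseteq> As (f (Suc n))" by (simp add: f_Suc)
    then show ?thesis using kappa_rep_mono[OF rep above] by blast
  qed
  moreover have "(\<alpha>, \<delta>) \<in> r" using above[of 0] unfolding f_def olt_def by simp
  ultimately show ?thesis by blast
qed

lemma club_closure_points:
  assumes rep: "kappa_rep r A As"
    and g: "\<And>x. x \<in> A \<Longrightarrow> small (g x)" "\<And>x. x \<in> A \<Longrightarrow> g x \<subseteq> A"
  shows "club r {\<delta>. \<forall>x\<in>As \<delta>. g x \<subseteq> As \<delta>}"
  unfolding club_def
proof (intro conjI allI impI)
  fix \<alpha>
  have "\<exists>\<delta>. (\<alpha>, \<delta>) \<in> r \<and> (\<forall>x\<in>As \<delta>. g x \<subseteq> As \<delta>)"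
    by (rule closure_point_above[OF rep]) (use g in simp_all)
  then show "\<exists>\<beta>\<in>{\<delta>. \<forall>x\<in>As \<delta>. g x \<subseteq> As \<delta>}. (\<alpha>, \<beta>) \<in> r" by blast
next
  fix \<delta> assume "is_limit r \<delta> \<and> (\<forall>\<beta>. olt r \<beta> \<delta> \<longrightarrow> (\<exists>\<gamma>\<in>{\<delta>. \<forall>x\<in>As \<delta>. g x \<subseteq> As \<delta>}. olt r \<beta> \<gamma> \<and> olt r \<gamma> \<delta>))"
  then have lim: "is_limit r \<delta>"
    and cof: "\<And>\<beta>. olt r \<beta> \<delta> \<Longrightarrow> \<exists>\<gamma>. (\<forall>x\<in>As \<gamma>. g x \<subseteq> As \<gamma>) \<and> olt r \<beta> \<gamma> \<and> olt r \<gamma> \<delta>"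
    by auto
  show "\<delta> \<in> {\<delta>. \<forall>x\<in>As \<delta>. g x \<subseteq> As \<delta>}" using closure_points_closed[OF rep lim cof] by simp
qed

end

text \<open>The order must live on a subset of \<open>'k\<close>, so the sequences are coded by an injection.\<close>

locale kb_encoding = regular_cardinal r for r :: "'k rel" +
  fixes enc :: "'k list \<Rightarrow> 'k"
  assumes inj_enc: "inj enc"
begin

definition I :: "'k set" where
  "I = range enc"

definition L :: "'k rel" where
  "L = map_prod enc enc ` kb_order"

lemma enc_in_L_iff: "(enc s, enc t) \<in> L \<longleftrightarrow> kleene_brouwer (olt r) s t"
proof -
  have "inj (map_prod enc enc)" using inj_enc by (simp add: prod.inj_map)
  moreover have "(enc s, enc t) = map_prod enc enc (s, t)" by simp
  ultimately show ?thesis unfolding L_def by (simp only: inj_image_mem_iff) simp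
qed

lemma in_L_E:
  assumes "(x, y) \<in> L"
  obtains s t where "x = enc s" "y = enc t" "kleene_brouwer (olt r) s t"
  using assms unfolding L_def by blast

lemma enc_inv_enc: "x \<in> I \<Longrightarrow> enc (inv enc x) = x"
  unfolding I_def by (simp add: f_inv_into_f)

lemma L_subset: "L \<subseteq> I \<times> I"
  unfolding L_def I_def by auto

lemma strict_linear_order_on_L: "strict_linear_order_on I L"
  unfolding strict_linear_order_on_def
proof (intro conjI)
  show "trans L"
  proof (rule transI)
    fix x y z assume xy: "(x, y) \<in> L" and yz: "(y, z) \<in> L"
    obtain s t where "x = enc s" "y = enc t" "kleene_brouwer (olt r) s t" using xy by (rule in_L_E)
    moreover obtain t' u where "y = enc t'" "z = enc u" "kleene_brouwer (olt r) t' u"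
      using yz by (rule in_L_E)
    moreover have "t' = t" using calculation by (simp add: inj_eq[OF inj_enc])
    ultimately show "(x, z) \<in> L" using enc_in_L_iff kb_trans by blast
  qed
  show "irrefl L"
  proof (rule irreflI)
    fix x show "(x, x) \<notin> L"
    proof
      assume "(x, x) \<in> L"
      then obtain s t where "x = enc s" "x = enc t" "kleene_brouwer (olt r) s t" by (rule in_L_E)
      moreover have "s = t" using calculation by (simp add: inj_eq[OF inj_enc])
      ultimately show False using kb_irrefl by simp
    qed
  qed
  show "total_on I L" unfolding total_on_def I_def
  proof (intro ballI impI)
    fix x y assume "x \<in> range enc" "y \<in> range enc" "x \<noteq> y"
    then obtain s t where "x = enc s" "y = enc t" "s \<noteq> t" by blast
    then show "(x, y) \<in> L \<or> (y, x) \<in> L" using enc_in_L_iff kb_total by simp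
  qed
qed

lemma L_irrefl: "(x, x) \<notin> L"
  using strict_linear_order_on_L unfolding strict_linear_order_on_def irrefl_def by blast

lemma card_of_I: "|I| =o r"
proof -
  have "|I| \<le>o |UNIV :: 'k set|" by (rule card_of_mono1) simp
  moreover have "|UNIV :: 'k set| \<le>o |I|"
  proof (rule card_of_ordLeqI[of "\<lambda>x. enc [x]"])
    show "inj_on (\<lambda>x. enc [x]) UNIV" by (simp add: inj_on_def inj_eq[OF inj_enc])
  qed (simp add: I_def)
  ultimately have "|I| =o |UNIV :: 'k set|" using ordIso_iff_ordLeq by blast
  then show ?thesis using card_of_UNIV by (rule ordIso_transitive)
qed

lemma same_position_enc:
  "same_position L (enc ` C) (enc s1) (enc s2) \<longleftrightarrow> same_position kb_order C s1 s2"
  unfolding same_position_def by (simp add: enc_in_L_iff inj_eq[OF inj_enc])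

lemma tp_bs_enc_eq_iff:
  assumes "B \<subseteq> I"
  shows "tp_bs L [enc s1] B = tp_bs L [enc s2] B \<longleftrightarrow> same_position kb_order (inv enc ` B) s1 s2"
proof -
  have "B = enc ` inv enc ` B" using assms enc_inv_enc by force
  then show ?thesis
    using tp_bs_singleton_eq_iff[of "enc s1" L "enc s2"] same_position_enc[of "inv enc ` B"]
      enc_in_L_iff kb_irrefl by simp
qed

lemma stable_bs_I: "stable_bs r I L"
  unfolding stable_bs_def
proof (intro allI impI, elim conjE)
  fix B assume B: "B \<subseteq> I" "small B"
  define P where "P = prefixes (inv enc ` B)"
  have P: "prefix_closed P" "[] \<in> P" "small P"
    unfolding P_def
    by (rule prefix_closed_prefixes, simp add: prefixes_def, rule small_prefixes[OF small_image[OF B(2)]])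
  define rep where "rep \<sigma> = (SOME s. signature P s = \<sigma>)" for \<sigma>
  have "tp_bs L [enc s] B = tp_bs L [enc (rep (signature P s))] B" for s
  proof -
    have "signature P (rep (signature P s)) = signature P s"
      unfolding rep_def by (rule someI) (rule refl)
    then have "same_position kb_order P s (rep (signature P s))"
      using same_position_signature[OF P(1,2)] by metis
    then have "same_position kb_order (inv enc ` B) s (rep (signature P s))"
      using subset_prefixes[of "inv enc ` B", folded P_def] by (rule same_position_subset)
    then show ?thesis using tp_bs_enc_eq_iff[OF B(1)] by blast
  qed
  then have "{tp_bs L [a] B | a. a \<in> I} \<subseteq> (\<lambda>\<sigma>. tp_bs L [enc (rep \<sigma>)] B) ` range (signature P)"
    unfolding I_def by auto
  then show "small {tp_bs L [a] B | a. a \<in> I}"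
    by (rule small_subset[OF small_image[OF small_range_signature[OF P(3,2)]]])
qed

lemma tp_bs_append_large:
  assumes B: "B \<subseteq> I" "small B" and s: "enc s \<notin> B"
  shows "\<exists>\<gamma>. \<forall>\<eta> w. olt r \<gamma> \<eta> \<longrightarrow> tp_bs L [enc (s @ \<eta> # w)] B = tp_bs L [enc s] B"
proof -
  define H where "H = inv enc ` B"
  have "s \<notin> H"
  proof
    assume "s \<in> H"
    then obtain x where "x \<in> B" "s = inv enc x" unfolding H_def by blast
    then show False using s B(1) enc_inv_enc by auto
  qed
  define K where "K = {hd u | u. u \<noteq> [] \<and> s @ u \<in> H}"
  have "K \<subseteq> (\<lambda>c. c ! length s) ` H"
  proof
    fix k assume "k \<in> K"
    then obtain u where "u \<noteq> []" "s @ u \<in> H" "k = hd u" unfolding K_def by blast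
    then have "k = (s @ u) ! length s" by (cases u) auto
    then show "k \<in> (\<lambda>c. c ! length s) ` H" using \<open>s @ u \<in> H\<close> by blast
  qed
  then have "small K" using small_subset small_image[OF small_image[OF B(2)]] unfolding H_def by blast
  then obtain \<gamma> where \<gamma>: "\<And>k. k \<in> K \<Longrightarrow> olt r k \<gamma>" using small_bounded by blast
  have "tp_bs L [enc (s @ \<eta> # w)] B = tp_bs L [enc s] B" if \<eta>: "olt r \<gamma> \<eta>" for \<eta> w
  proof -
    have "olt r (hd u) \<eta>" if "u \<noteq> []" "s @ u \<in> H" for u
      using \<gamma>[of "hd u"] that \<eta> trans unfolding K_def by blast
    then have "same_position kb_order H (s @ \<eta> # w) s"
      using same_position_append_above[OF \<open>s \<notin> H\<close>] by simp
    then show ?thesis using tp_bs_enc_eq_iff[OF B(1)] unfolding H_def by blast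
  qed
  then show ?thesis by blast
qed

definition color :: "'k \<Rightarrow> 'k" where
  "color x = last (inv enc x)"

lemma colorable_I: "colorable r I L"
  unfolding colorable_def
proof (intro exI[of _ color] allI impI ballI, elim conjE)
  fix B b \<alpha> assume B: "B \<subseteq> I" "small B" and b: "b \<in> I - B"
  define S where "S = {a \<in> I. tp_bs L [a] B = tp_bs L [b] B \<and> color a = \<alpha>}"
  define s where "s = inv enc b"
  have b_enc: "b = enc s" unfolding s_def using b enc_inv_enc by simp
  then obtain \<gamma> where large: "\<And>\<eta> w. olt r \<gamma> \<eta> \<Longrightarrow> tp_bs L [enc (s @ \<eta> # w)] B = tp_bs L [b] B"
    using tp_bs_append_large[OF B, of s] b by auto
  define U where "U = {\<eta>. olt r \<gamma> \<eta>}"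
  define m where "m \<eta> = enc (s @ [\<eta>, \<alpha>])" for \<eta>
  have "m ` U \<subseteq> S"
  proof
    fix a assume "a \<in> m ` U"
    then obtain \<eta> where \<eta>: "olt r \<gamma> \<eta>" "a = m \<eta>" unfolding U_def by blast
    then have "tp_bs L [a] B = tp_bs L [b] B" using large[of \<eta> "[\<alpha>]"] unfolding m_def by simp
    moreover have "a \<in> I" "color a = \<alpha>" using \<eta>(2) unfolding m_def color_def I_def by (simp_all add: inj_enc)
    ultimately show "a \<in> S" unfolding S_def by blast
  qed
  moreover have "inj_on m U" unfolding m_def inj_on_def by (simp add: inj_eq[OF inj_enc])
  ultimately have "|U| \<le>o |S|" using card_of_ordLeqI[of m U S] by blast
  moreover have "r \<le>o |U|" unfolding U_def using not_small_ordLeq not_small_above by blast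
  ultimately have "r \<le>o |S|" using ordLeq_transitive by blast
  moreover have "|S| \<le>o r"
    using card_of_mono1[of S I] card_of_I ordLeq_ordIso_trans unfolding S_def by blast
  ultimately show "|{a \<in> I. tp_bs L [a] B = tp_bs L [b] B \<and> color a = \<alpha>}| =o r"
    unfolding S_def[symmetric] using ordIso_iff_ordLeq by blast
qed

lemma down_closed_inv_enc:
  assumes "\<forall>x\<in>A. enc ` lowerings (inv enc x) \<subseteq> A"
  shows "down_closed (inv enc ` A)"
  unfolding down_closed_def
proof
  fix s assume "s \<in> inv enc ` A"
  then obtain x where "x \<in> A" "s = inv enc x" by blast
  then have "enc ` lowerings s \<subseteq> A" using assms by blast
  show "lowerings s \<subseteq> inv enc ` A"
  proof
    fix t assume "t \<in> lowerings s"
    then have "enc t \<in> A" using \<open>enc ` lowerings s \<subseteq> A\<close> by blast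
    then show "t \<in> inv enc ` A" by (rule rev_image_eqI) (simp add: inv_f_f[OF inj_enc])
  qed
qed

lemma not_in_Sp_bs:
  assumes rep: "kappa_rep r I As" and lim: "is_limit r \<delta>" and dc: "down_closed (inv enc ` As \<delta>)"
  shows "\<delta> \<notin> Sp_bs r L I As"
proof
  assume "\<delta> \<in> Sp_bs r L I As"
  then obtain a where "a \<in> I" and split: "\<And>\<beta>. olt r \<beta> \<delta> \<Longrightarrow> bs_splits L a (As \<delta>) (As \<beta>)"
    unfolding Sp_bs_def by blast
  define S where "S = inv enc ` As \<delta>"
  obtain \<beta>0 where "olt r \<beta>0 \<delta>" using lim unfolding is_limit_def by blast
  then have "S \<noteq> {}" using split[of \<beta>0] unfolding bs_splits_def S_def by blast
  with dc obtain p where "p \<in> S" and shadow: "\<And>c1 c2. c1 \<in> S \<Longrightarrow> c2 \<in> S \<Longrightarrow>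
      same_position kb_order {p} c1 c2 \<Longrightarrow> same_position kb_order {inv enc a} c1 c2"
    unfolding S_def by (rule down_closed_shadow[where s = "inv enc a"]) blast
  from \<open>p \<in> S\<close> obtain x where "x \<in> As \<delta>" "p = inv enc x" unfolding S_def by blast
  then have "enc p \<in> As \<delta>" using enc_inv_enc[OF subsetD[OF kappa_repD(1)[OF rep]]] by simp
  then obtain \<beta> where \<beta>: "olt r \<beta> \<delta>" "enc p \<in> As \<beta>" by (rule kappa_rep_limit[OF rep lim])
  from split[OF \<beta>(1)] obtain b1 b2 where b: "b1 \<in> As \<delta>" "b2 \<in> As \<delta>"
    and eq: "tp_bs L [b1] (As \<beta>) = tp_bs L [b2] (As \<beta>)" and ne: "\<not> same_position L {a} b1 b2"
    by (rule bs_splitsE)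
  have "same_position L (As \<beta>) b1 b2" using tp_bs_singleton_eq_iff[of b1 L b2] eq L_irrefl by simp
  then have p_pos: "same_position L {enc p} b1 b2" by (rule same_position_subset) (simp add: \<beta>(2))
  define c1 c2 where "c1 = inv enc b1" and "c2 = inv enc b2"
  have bc: "b1 = enc c1" "b2 = enc c2"
    using b enc_inv_enc[OF subsetD[OF kappa_repD(1)[OF rep]]] unfolding c1_def c2_def by simp_all
  have "c1 \<in> S" "c2 \<in> S" unfolding S_def c1_def c2_def using b by auto
  moreover have "same_position kb_order {p} c1 c2"
    using same_position_enc[of "{p}" c1 c2] p_pos bc by simp
  ultimately have "same_position kb_order {inv enc a} c1 c2" by (rule shadow)
  then have "same_position L {a} b1 b2"
    using same_position_enc[of "{inv enc a}" c1 c2] bc enc_inv_enc[OF \<open>a \<in> I\<close>] by simp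
  with ne show False by contradiction
qed

lemma nice_bs_I: "nice_bs r I L"
  unfolding nice_bs_def
proof (intro allI impI)
  fix As assume rep: "kappa_rep r I As"
  let ?C = "{\<delta>. \<forall>x\<in>As \<delta>. enc ` lowerings (inv enc x) \<subseteq> As \<delta>}"
  have "club r ?C"
    by (rule club_closure_points[OF rep]) (simp_all add: I_def image_subsetI small_image small_lowerings)
  moreover have "Sp_bs r L I As \<inter> ?C = {}"
    using not_in_Sp_bs[OF rep] down_closed_inv_enc unfolding Sp_bs_def by blast
  ultimately show "\<not> stationary r (Sp_bs r L I As)" unfolding stationary_def by blast
qed

end

primrec list_code :: "('a \<times> 'a \<Rightarrow> 'a) \<Rightarrow> 'a \<Rightarrow> 'a \<Rightarrow> 'a list \<Rightarrow> 'a" where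
  "list_code pair nil sep [] = nil"
| "list_code pair nil sep (x # xs) = pair (pair (x, list_code pair nil sep xs), sep)"

lemma inj_list_code:
  assumes pair: "inj pair" and "c \<noteq> d"
  shows "inj (list_code pair (pair (c, c)) d)"
proof (rule injI)
  fix xs ys show "list_code pair (pair (c, c)) d xs = list_code pair (pair (c, c)) d ys \<Longrightarrow> xs = ys"
  proof (induction xs arbitrary: ys)
    case Nil
    then show ?case using assms by (cases ys) (auto simp: inj_eq[OF pair])
  next
    case (Cons x xs)
    then show ?case using assms by (cases ys) (auto simp: inj_eq[OF pair])
  qed
qed

lemma infinite_list_encoding:
  assumes "infinite (UNIV :: 'a set)"
  obtains enc :: "'a list \<Rightarrow> 'a" where "inj enc"
proof -
  have "|(UNIV :: 'a set) \<times> (UNIV :: 'a set)| =o |UNIV :: 'a set|" by (rule card_of_Times_same_infinite[OF assms])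
  then obtain pair where "bij_betw pair ((UNIV :: 'a set) \<times> (UNIV :: 'a set)) (UNIV :: 'a set)"
    using card_of_ordIso by blast
  then have pair: "inj pair" by (simp add: bij_betw_def)
  have "\<exists>d :: 'a. d \<notin> {undefined}" by (rule ex_new_if_finite[OF assms]) simp
  then obtain d :: 'a where "d \<noteq> undefined" by auto
  show ?thesis by (rule that[OF inj_list_code[OF pair not_sym[OF \<open>d \<noteq> undefined\<close>]]])
qed

theorem mainTheorem7:
  fixes r :: "'k rel"
  assumes "card_order r"
    and "regularCard r"
    and "natLeq <o r"
    and "|SIGMA \<alpha>:(UNIV::'k set). Func (underS r \<alpha>) (UNIV::'k set)| =o r"
    and "\<forall>\<alpha>. |Func (UNIV::nat set) (underS r \<alpha>)| <o r"
  shows "\<exists>(I::'k set) (L::'k rel). L \<subseteq> I \<times> I \<and> strict_linear_order_on I L \<and> |I| =o r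
           \<and> stable_bs r I L \<and> nice_bs r I L \<and> colorable r I L"
proof -
  interpret regular_cardinal r using assms(1-3) by unfold_locales
  obtain enc :: "'k list \<Rightarrow> 'k" where "inj enc"
    using infinite_list_encoding infinite_Field_r Field_r by metis
  interpret kb_encoding r enc by unfold_locales (rule \<open>inj enc\<close>)
  show ?thesis using L_subset strict_linear_order_on_L card_of_I stable_bs_I nice_bs_I colorable_I by blast
qed

end
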